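(* For every single-use two-way automaton there is a number $N\in\mathbb N$ such that for every string $u$ over $\Sigma+\{\vdash,\dashv\}$, the Shepherdson profile of $u$ is supported by a tuple of at most $N$ atoms.
   Context: Atoms, atom automorphisms, polynomial orbit-finite sets, supports (an element $x$ is supported by $\bar a\in\mathbb A^*$ if every atom automorphism fixing $\bar a$ pointwise fixes $x$; automorphisms act on functions by $\pi(f)=\pi\circ f\circ\pi^{-1}$) and single-use two-way automata are as follows. Fix a countably infinite set $\mathbb A$ of atoms; a polynomial orbit-finite set is built from $\mathbb A$ and singletons by finite products and disjoint unions. A single-use two-way automaton has a polynomial orbit-finite input alphabet $\Sigma$, finitely many states $Q$, finitely many registers (say $k$) holding atoms or $\bot$, and a deterministic transition function assigning to each state a question and, for each answer, a next state and an action. Questions: apply an equivariant function $\Sigma+\{\vdash,\dashv\}\to\{\mathrm{yes},\mathrm{no}\}$ to the letter under the head; or test equality of the atoms in two registers (rejecting if one is $\bot$), after which both registers are set to $\bot$ (single-use restriction). Actions: store the value of an equivariant function $\Sigma+\{\vdash,\dashv\}\to\mathbb A+\bot$ of the current letter in a register; move the head left or right; accept or reject. The Shepherdson profile of $u$ is the function $Q\times(\mathbb A+\bot)^k\times\{\leftarrow,\rightarrow\}\to\{\mathrm{accept},\mathrm{loop}\}+Q\times(\mathbb A+\bot)^k\times\{\leftarrow,\rightarrow\}$ mapping $(q,\eta,d)$ to the outcome of running the automaton on $u$ from state $q$ with register valuation $\eta$, starting at the leftmost position of $u$ if $d$ says the run enters from the left and at the rightmost position otherwise, until the head leaves $u$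 (outcome: the state, register valuation and side on which it exits), or it accepts (outcome accept), or it rejects or runs forever (outcome loop). *)

theory Defs
  imports Main
begin

type_synonym atom = nat

definition atom_aut :: "(atom \<Rightarrow> atom) \<Rightarrow> bool" where
  "atom_aut \<pi> \<longleftrightarrow> bij \<pi>"

text \<open>Syntax of polynomial orbit-finite sets: built from the atoms and singletons
  by binary (hence finite) products and disjoint unions.\<close>
datatype pof = PAtoms | PSingleton | PProd pof pof | PSum pof pof

datatype val = VAtom atom | VUnit | VPair val val | VInl val | VInr val

fun pof_set :: "pof \<Rightarrow> val set" where
  "pof_set PAtoms = range VAtom"
| "pof_set PSingleton = {VUnit}"
| "pof_set (PProd s t) = {VPair x y | x y. x \<in> pof_set s \<and> y \<in> pof_set t}"
| "pof_set (PSum s t) = VInl ` pof_set s \<union> VInr ` pof_set t"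

fun val_perm :: "(atom \<Rightarrow> atom) \<Rightarrow> val \<Rightarrow> val" where
  "val_perm \<pi> (VAtom a) = VAtom (\<pi> a)"
| "val_perm \<pi> VUnit = VUnit"
| "val_perm \<pi> (VPair x y) = VPair (val_perm \<pi> x) (val_perm \<pi> y)"
| "val_perm \<pi> (VInl x) = VInl (val_perm \<pi> x)"
| "val_perm \<pi> (VInr x) = VInr (val_perm \<pi> x)"

datatype letter = Sym val | LMark | RMark

definition letters :: "pof \<Rightarrow> letter set" where
  "letters \<Sigma> = Sym ` pof_set \<Sigma> \<union> {LMark, RMark}"

fun letter_perm :: "(atom \<Rightarrow> atom) \<Rightarrow> letter \<Rightarrow> letter" where
  "letter_perm \<pi> (Sym x) = Sym (val_perm \<pi> x)"
| "letter_perm \<pi> LMark = LMark"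
| "letter_perm \<pi> RMark = RMark"

text \<open>Equivariant functions (on \<Sigma> + {\<turnstile>,\<stileturn>}) into {yes,no} and into \<bbbA> + \<bottom>
  (None plays the role of \<bottom>).\<close>
definition equiv_test :: "pof \<Rightarrow> (letter \<Rightarrow> bool) \<Rightarrow> bool" where
  "equiv_test \<Sigma> f \<longleftrightarrow>
     (\<forall>\<pi> x. atom_aut \<pi> \<longrightarrow> x \<in> letters \<Sigma> \<longrightarrow> f (letter_perm \<pi> x) = f x)"

definition equiv_store :: "pof \<Rightarrow> (letter \<Rightarrow> atom option) \<Rightarrow> bool" where
  "equiv_store \<Sigma> g \<longleftrightarrow>
     (\<forall>\<pi> x. atom_aut \<pi> \<longrightarrow> x \<in> letters \<Sigma> \<longrightarrow> g (letter_perm \<pi> x) = map_option \<pi> (g x))"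

datatype question = QTest "letter \<Rightarrow> bool" | QEq nat nat

datatype action = AStore nat "letter \<Rightarrow> atom option" | ALeft | ARight | AAccept | AReject

text \<open>The transition function gives, for each
  state, a question and, for each answer (True = yes), a next state and an action.\<close>
record 'q sutwa =
  alph :: pof
  nregs :: nat
  delta :: "'q \<Rightarrow> question \<times> (bool \<Rightarrow> 'q \<times> action)"

definition wf_sutwa :: "('q::finite) sutwa \<Rightarrow> bool" where
  "wf_sutwa A \<longleftrightarrow>
     (\<forall>q. case fst (delta A q) of
             QTest f \<Rightarrow> equiv_test (alph A) f
           | QEq i j \<Rightarrow> i < nregs A \<and> j < nregs A) \<and>
     (\<forall>q b. case snd (snd (delta A q) b) of
             AStore i g \<Rightarrow> i < nregs A \<and> equiv_store (alph A) g
           | _ \<Rightarrow> True)"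

datatype side = LeftSide | RightSide

type_synonym regs = "atom option list"

type_synonym 'q config = "'q \<times> regs \<times> int"

datatype 'q stepres = Cont "'q config" | Halt bool

definition inside :: "letter list \<Rightarrow> 'q config \<Rightarrow> bool" where
  "inside u c \<longleftrightarrow> (case c of (q, \<eta>, p) \<Rightarrow> 0 \<le> p \<and> p < int (length u))"

definition do_action :: "letter list \<Rightarrow> 'q \<Rightarrow> action \<Rightarrow> regs \<Rightarrow> int \<Rightarrow> 'q stepres" where
  "do_action u q' a \<eta> p = (case a of
       AStore i g \<Rightarrow> Cont (q', \<eta>[i := g (u ! nat p)], p)
     | ALeft \<Rightarrow> Cont (q', \<eta>, p - 1)
     | ARight \<Rightarrow> Cont (q', \<eta>, p + 1)
     | AAccept \<Rightarrow> Halt True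
     | AReject \<Rightarrow> Halt False)"

definition step :: "'q sutwa \<Rightarrow> letter list \<Rightarrow> 'q config \<Rightarrow> 'q stepres" where
  "step A u c = (case c of (q, \<eta>, p) \<Rightarrow>
     (case delta A q of (qu, resp) \<Rightarrow>
       (case qu of
          QTest f \<Rightarrow> (case resp (f (u ! nat p)) of (q', a) \<Rightarrow> do_action u q' a \<eta> p)
        | QEq i j \<Rightarrow>
            (if \<eta> ! i = None \<or> \<eta> ! j = None then Halt False
             else (case resp (\<eta> ! i = \<eta> ! j) of
                     (q', a) \<Rightarrow> do_action u q' a (\<eta>[i := None, j := None]) p)))))"

definition next_rel :: "'q sutwa \<Rightarrow> letter list \<Rightarrow> 'q config \<Rightarrow> 'q config \<Rightarrow> bool" where
  "next_rel A u c c' \<longleftrightarrow> inside u c \<and> step A u c = Cont c'"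

definition reaches :: "'q sutwa \<Rightarrow> letter list \<Rightarrow> 'q config \<Rightarrow> 'q config \<Rightarrow> bool" where
  "reaches A u = (next_rel A u)\<^sup>*\<^sup>*"

datatype 'q outcome = OAccept | OLoop | OExit 'q regs side

definition start_config :: "letter list \<Rightarrow> 'q \<Rightarrow> regs \<Rightarrow> side \<Rightarrow> 'q config" where
  "start_config u q \<eta> d =
     (q, \<eta>, (case d of LeftSide \<Rightarrow> 0 | RightSide \<Rightarrow> int (length u) - 1))"

definition exit_outcome :: "letter list \<Rightarrow> 'q config \<Rightarrow> 'q outcome" where
  "exit_outcome u c = (case c of (q, \<eta>, p) \<Rightarrow>
      OExit q \<eta> (if p < 0 then LeftSide else RightSide))"

text \<open>Outcome of running from a configuration until the head leaves u (exit), or it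
  accepts; rejecting or running forever gives OLoop.\<close>
definition run_outcome :: "'q sutwa \<Rightarrow> letter list \<Rightarrow> 'q config \<Rightarrow> 'q outcome" where
  "run_outcome A u c =
     (if \<exists>c'. reaches A u c c' \<and> inside u c' \<and> step A u c' = Halt True then OAccept
      else if \<exists>c'. reaches A u c c' \<and> \<not> inside u c'
        then exit_outcome u (THE c'. reaches A u c c' \<and> \<not> inside u c')
      else OLoop)"

text \<open>The Shepherdson profile, as a partial function whose domain is
  Q \<times> (\<bbbA>+\<bottom>)^k \<times> {\<leftarrow>,\<rightarrow>} (valuations are the lists of length k).\<close>
definition shepherdson_profile ::
    "('q::finite) sutwa \<Rightarrow> letter list \<Rightarrow> ('q \<times> regs \<times> side) \<rightharpoonup> 'q outcome" where
  "shepherdson_profile A u = (\<lambda>(q, \<eta>, d).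
     if length \<eta> = nregs A then Some (run_outcome A u (start_config u q \<eta> d)) else None)"

definition regs_perm :: "(atom \<Rightarrow> atom) \<Rightarrow> regs \<Rightarrow> regs" where
  "regs_perm \<pi> \<eta> = map (map_option \<pi>) \<eta>"

fun outcome_perm :: "(atom \<Rightarrow> atom) \<Rightarrow> 'q outcome \<Rightarrow> 'q outcome" where
  "outcome_perm \<pi> OAccept = OAccept"
| "outcome_perm \<pi> OLoop = OLoop"
| "outcome_perm \<pi> (OExit q \<eta> d) = OExit q (regs_perm \<pi> \<eta>) d"

definition profile_perm ::
    "(atom \<Rightarrow> atom) \<Rightarrow> (('q \<times> regs \<times> side) \<rightharpoonup> 'q outcome) \<Rightarrow> (('q \<times> regs \<times> side) \<rightharpoonup> 'q outcome)" where
  "profile_perm \<pi> f = (\<lambda>(q, \<eta>, d). map_option (outcome_perm \<pi>) (f (q, regs_perm (inv \<pi>) \<eta>, d)))"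

definition supports_profile :: "atom list \<Rightarrow> (('q \<times> regs \<times> side) \<rightharpoonup> 'q outcome) \<Rightarrow> bool" where
  "supports_profile as f \<longleftrightarrow>
     (\<forall>\<pi>. atom_aut \<pi> \<longrightarrow> (\<forall>a\<in>set as. \<pi> a = a) \<longrightarrow> profile_perm \<pi> f = f)"

end

theory Submission
  imports Defs
begin

text \<open>
  Runs are followed symbolically from abstract configurations \<open>((q, \<sigma>, p), X)\<close>: the registers
  in \<open>X\<close> still hold their arbitrary initial contents, all other registers hold the contents \<open>\<sigma>\<close>,
  which are the same for every concrete run described. Until an equality test reads a register
  of \<open>X\<close>, all these runs move in lockstep on the same input word, so two runs whose initial
  contents differ by an atom automorphism \<open>\<pi>\<close> end with outcomes that differ by \<open>\<pi>\<close>, provided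
  \<open>\<pi>\<close> fixes the atoms in \<open>\<sigma>\<close> where the head leaves the word. At an equality test reading a
  register of \<open>X\<close> both answers are possible, but the single-use restriction empties the two
  tested registers, so each answer continues with strictly fewer unknown registers. By induction
  on \<open>|X|\<close>, the outcomes are supported by \<open>B(|X|)\<close> atoms, where \<open>B(0) = k\<close> and
  \<open>B(n+1) = k + 2 B(n)\<close> for \<open>k\<close> registers; the profile is then supported by \<open>2 |Q| B(k)\<close> atoms.
\<close>

lemma rtranclp_functional_stuck_eq:
  assumes functional: "\<And>x y z. r x y \<Longrightarrow> r x z \<Longrightarrow> y = z"
    and "r\<^sup>*\<^sup>* a b" "r\<^sup>*\<^sup>* a c" and "\<nexists>d. r b d" "\<nexists>d. r c d"
  shows "b = c"
proof -
  have "single_valued {(x, y). r x y}"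
    using functional by (auto intro: single_valuedI)
  moreover have "(a, b) \<in> {(x, y). r x y}\<^sup>*" "(a, c) \<in> {(x, y). r x y}\<^sup>*"
    using assms(2,3) by (simp_all add: rtrancl_def)
  ultimately have "(b, c) \<in> {(x, y). r x y}\<^sup>* \<or> (c, b) \<in> {(x, y). r x y}\<^sup>*"
    by (rule single_valued_confluent)
  then show ?thesis
    using assms(4,5) by (auto elim: converse_rtranclE)
qed

lemma finite_family_common_list:
  assumes "finite I" and exists: "\<And>i. i \<in> I \<Longrightarrow> \<exists>xs. length xs \<le> M \<and> P i xs"
    and mono: "\<And>i xs ys. P i xs \<Longrightarrow> set xs \<subseteq> set ys \<Longrightarrow> P i ys"
  shows "\<exists>ys. length ys \<le> card I * M \<and> (\<forall>i\<in>I. P i ys)"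
  using \<open>finite I\<close> exists
proof (induction I rule: finite_induct)
  case (insert i I)
  then obtain ys xs where "length ys \<le> card I * M" "\<forall>j\<in>I. P j ys" "length xs \<le> M" "P i xs"
    by blast
  then have "length (xs @ ys) \<le> card (insert i I) * M \<and> (\<forall>j\<in>insert i I. P j (xs @ ys))"
    using insert.hyps mono by auto
  then show ?case by blast
qed simp

lemma reaches_unfold:
  "reaches A u c x \<longleftrightarrow> x = c \<or> (\<exists>c'. next_rel A u c c' \<and> reaches A u c' x)"
  unfolding reaches_def by (metis converse_rtranclpE converse_rtranclp_into_rtranclp rtranclp.rtrancl_refl)

lemma run_outcome_outside: "\<not> inside u c \<Longrightarrow> run_outcome A u c = exit_outcome u c"
proof -
  assume out: "\<not> inside u c"
  then have "reaches A u c x \<longleftrightarrow> x = c" for x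
    by (subst reaches_unfold) (simp add: next_rel_def)
  then show ?thesis
    using out by (simp add: run_outcome_def the_equality)
qed

lemma run_outcome_Halt:
  "inside u c \<Longrightarrow> step A u c = Halt b \<Longrightarrow> run_outcome A u c = (if b then OAccept else OLoop)"
proof -
  assume "inside u c" "step A u c = Halt b"
  moreover from this have "reaches A u c x \<longleftrightarrow> x = c" for x
    by (subst reaches_unfold) (simp add: next_rel_def)
  ultimately show ?thesis
    by (simp add: run_outcome_def)
qed

lemma run_outcome_Cont:
  "inside u c \<Longrightarrow> step A u c = Cont c' \<Longrightarrow> run_outcome A u c = run_outcome A u c'"
proof -
  assume "inside u c" "step A u c = Cont c'"
  moreover from this have "reaches A u c x \<longleftrightarrow> x = c \<or> reaches A u c' x" for x
    by (subst reaches_unfold) (simp add: next_rel_def)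
  ultimately have
    "(\<lambda>x. reaches A u c x \<and> inside u x \<and> step A u x = Halt True)
       = (\<lambda>x. reaches A u c' x \<and> inside u x \<and> step A u x = Halt True)"
    "(\<lambda>x. reaches A u c x \<and> \<not> inside u x) = (\<lambda>x. reaches A u c' x \<and> \<not> inside u x)"
    by auto
  then show ?thesis
    unfolding run_outcome_def by presburger
qed

definition stopped :: "'q sutwa \<Rightarrow> letter list \<Rightarrow> 'q config \<Rightarrow> bool" where
  "stopped A u c \<longleftrightarrow> \<not> inside u c \<or> (\<exists>b. step A u c = Halt b)"

lemma run_outcome_loop: "\<nexists>x. reaches A u c x \<and> stopped A u x \<Longrightarrow> run_outcome A u c = OLoop"
  unfolding run_outcome_def stopped_def by auto

lemma relpowp_next_rel_Cont:
  "(next_rel A u ^^ Suc n) c c'' \<Longrightarrow> step A u c = Cont c' \<Longrightarrow> (next_rel A u ^^ n) c' c''"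
  using relpowp_Suc_D2 by (metis next_rel_def stepres.inject)

context
  fixes A :: "'q sutwa" and u \<pi> and R :: "'q config \<Rightarrow> 'q config \<Rightarrow> bool"
  assumes sim_inside: "\<And>c1 c2. R c1 c2 \<Longrightarrow> inside u c1 = inside u c2"
    and sim_exit: "\<And>c1 c2. R c1 c2 \<Longrightarrow> \<not> inside u c1 \<Longrightarrow>
      exit_outcome u c1 = outcome_perm \<pi> (exit_outcome u c2)"
    and sim_step: "\<And>c1 c2. R c1 c2 \<Longrightarrow> inside u c1 \<Longrightarrow>
      (\<exists>b. step A u c1 = Halt b \<and> step A u c2 = Halt b) \<or>
      (\<exists>c1' c2'. step A u c1 = Cont c1' \<and> step A u c2 = Cont c2' \<and> R c1' c2') \<or>
      run_outcome A u c1 = outcome_perm \<pi> (run_outcome A u c2)"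
begin

lemma run_outcome_simulation_stopped:
  assumes "R c1 c2" and "stopped A u c1 \<or> stopped A u c2"
  shows "run_outcome A u c1 = outcome_perm \<pi> (run_outcome A u c2)"
proof (cases "inside u c1")
  case False
  then show ?thesis
    using assms sim_inside sim_exit by (simp add: run_outcome_outside)
next
  case True
  moreover have "inside u c2"
    using True sim_inside assms(1) by blast
  ultimately show ?thesis
    using assms sim_step[of c1 c2] unfolding stopped_def by (auto simp: run_outcome_Halt)
qed

lemma run_outcome_simulation_bounded:
  assumes "R c1 c2" and "\<exists>c. ((next_rel A u ^^ n) c1 c \<or> (next_rel A u ^^ n) c2 c) \<and> stopped A u c"
  shows "run_outcome A u c1 = outcome_perm \<pi> (run_outcome A u c2)"
  using assms
proof (induction n arbitrary: c1 c2)
  case 0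
  then show ?case
    using run_outcome_simulation_stopped by (metis relpowp_0_E)
next
  case (Suc n)
  show ?case
  proof (cases "stopped A u c1 \<or> stopped A u c2")
    case True
    then show ?thesis
      using Suc.prems run_outcome_simulation_stopped by blast
  next
    case False
    then have ins: "inside u c1" "inside u c2"
      unfolding stopped_def by auto
    from False obtain c1' c2' where cont: "step A u c1 = Cont c1'" "step A u c2 = Cont c2'"
      unfolding stopped_def by (metis stepres.exhaust)
    from sim_step[OF Suc.prems(1) ins(1)] cont
    consider "R c1' c2'" | "run_outcome A u c1 = outcome_perm \<pi> (run_outcome A u c2)"
      by auto
    then show ?thesis
    proof cases
      case 1
      from Suc.prems(2) obtain c where
        "(next_rel A u ^^ n) c1' c \<or> (next_rel A u ^^ n) c2' c" "stopped A u c"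
        using cont relpowp_next_rel_Cont by blast
      then have "run_outcome A u c1' = outcome_perm \<pi> (run_outcome A u c2')"
        using Suc.IH[OF 1] by blast
      then show ?thesis
        using cont ins by (simp add: run_outcome_Cont)
    qed
  qed
qed

lemma run_outcome_simulation:
  assumes "R c1 c2"
  shows "run_outcome A u c1 = outcome_perm \<pi> (run_outcome A u c2)"
proof (cases "\<exists>n c. ((next_rel A u ^^ n) c1 c \<or> (next_rel A u ^^ n) c2 c) \<and> stopped A u c")
  case True
  then show ?thesis
    using run_outcome_simulation_bounded assms by blast
next
  case False
  then have "run_outcome A u c = OLoop" if "c = c1 \<or> c = c2" for c
    using that by (intro run_outcome_loop) (auto simp only: reaches_def rtranclp_power)
  then show ?thesis by simp
qed

end

definition stored_regs :: "action \<Rightarrow> nat set" where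
  "stored_regs a = (case a of AStore i g \<Rightarrow> {i} | _ \<Rightarrow> {})"

lemma wf_sutwa_QEq: "wf_sutwa A \<Longrightarrow> delta A q = (QEq i j, resp) \<Longrightarrow> i < nregs A \<and> j < nregs A"
  unfolding wf_sutwa_def by (metis fst_conv question.simps(6))

lemma wf_sutwa_stored_regs:
  "wf_sutwa A \<Longrightarrow> delta A q = (qu, resp) \<Longrightarrow> resp b = (q', a) \<Longrightarrow> stored_regs a \<subseteq> {..<nregs A}"
proof -
  assume wf: "wf_sutwa A" and "delta A q = (qu, resp)" "resp b = (q', a)"
  moreover have "case snd (snd (delta A q) b) of AStore i g \<Rightarrow> i < nregs A \<and> equiv_store (alph A) g | _ \<Rightarrow> True"
    using wf unfolding wf_sutwa_def by blast
  ultimately show ?thesis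
    by (cases a) (auto simp: stored_regs_def)
qed

lemma do_action_length: "do_action u q a \<eta> p = Cont (q', \<eta>', p') \<Longrightarrow> length \<eta>' = length \<eta>"
  by (auto simp: do_action_def split: action.splits)

lemma step_length: "step A u (q, \<eta>, p) = Cont (q', \<eta>', p') \<Longrightarrow> length \<eta>' = length \<eta>"
  by (auto simp: step_def split: prod.splits question.splits if_splits dest!: do_action_length)

text \<open>\<open>\<sigma>\<close> holds the known register contents, shared by \<open>\<eta>1\<close> and \<open>\<eta>2\<close>; on the unknown
  registers \<open>X\<close> the valuations \<open>\<eta>1\<close> and \<open>\<eta>2\<close> are related by \<open>\<pi>\<close>.\<close>

definition regs_agree :: "nat \<Rightarrow> (atom \<Rightarrow> atom) \<Rightarrow> regs \<Rightarrow> nat set \<Rightarrow> regs \<Rightarrow> regs \<Rightarrow> bool" where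
  "regs_agree k \<pi> \<sigma> X \<eta>1 \<eta>2 \<longleftrightarrow> length \<sigma> = k \<and> length \<eta>1 = k \<and> length \<eta>2 = k \<and> X \<subseteq> {..<k} \<and>
     (\<forall>i<k. i \<notin> X \<longrightarrow> \<eta>1 ! i = \<sigma> ! i \<and> \<eta>2 ! i = \<sigma> ! i) \<and>
     (\<forall>i\<in>X. \<eta>1 ! i = map_option \<pi> (\<eta>2 ! i))"

lemma regs_agree_clear:
  "regs_agree k \<pi> \<sigma> X \<eta>1 \<eta>2 \<Longrightarrow> i < k \<Longrightarrow> j < k \<Longrightarrow>
   regs_agree k \<pi> (\<sigma>[i := None, j := None]) (X - {i, j}) (\<eta>1[i := None, j := None]) (\<eta>2[i := None, j := None])"
  by (auto simp: regs_agree_def nth_list_update)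

lemma regs_agree_imp_regs_perm:
  assumes ag: "regs_agree k \<pi> \<sigma> X \<eta>1 \<eta>2" and fixed: "\<And>a. Some a \<in> set \<sigma> \<Longrightarrow> \<pi> a = a"
  shows "\<eta>1 = regs_perm \<pi> \<eta>2"
proof (rule nth_equalityI)
  show "length \<eta>1 = length (regs_perm \<pi> \<eta>2)"
    using ag by (simp add: regs_agree_def regs_perm_def)
next
  fix i assume "i < length \<eta>1"
  moreover have "map_option \<pi> (\<sigma> ! i) = \<sigma> ! i" if "i < length \<sigma>"
    using fixed[of "the (\<sigma> ! i)"] that by (cases "\<sigma> ! i") (auto simp: in_set_conv_nth)
  ultimately show "\<eta>1 ! i = regs_perm \<pi> \<eta>2 ! i"
    using ag by (cases "i \<in> X") (auto simp: regs_agree_def regs_perm_def)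
qed

definition results_agree :: "nat \<Rightarrow> (atom \<Rightarrow> atom) \<Rightarrow> nat set \<Rightarrow> 'q stepres \<Rightarrow> 'q stepres \<Rightarrow> 'q stepres \<Rightarrow> bool"
  where "results_agree k \<pi> X r r1 r2 \<longleftrightarrow>
    (case r of
       Halt b \<Rightarrow> r1 = Halt b \<and> r2 = Halt b
     | Cont (q, \<sigma>, p) \<Rightarrow> \<exists>\<eta>1 \<eta>2. r1 = Cont (q, \<eta>1, p) \<and> r2 = Cont (q, \<eta>2, p) \<and> regs_agree k \<pi> \<sigma> X \<eta>1 \<eta>2)"

lemma do_action_agree:
  assumes "regs_agree k \<pi> \<sigma> X \<eta>1 \<eta>2" and "stored_regs a \<subseteq> {..<k}"
  shows "results_agree k \<pi> (X - stored_regs a)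
           (do_action u q a \<sigma> p) (do_action u q a \<eta>1 p) (do_action u q a \<eta>2 p)"
  using assms
  by (cases a) (auto simp: do_action_def results_agree_def regs_agree_def stored_regs_def nth_list_update)

definition tested_regs :: "question \<Rightarrow> nat set" where
  "tested_regs qu = (case qu of QTest f \<Rightarrow> {} | QEq i j \<Rightarrow> {i, j})"

definition transition :: "'q sutwa \<Rightarrow> letter list \<Rightarrow> 'q config \<Rightarrow> 'q \<times> action" where
  "transition A u c = (case c of (q, \<eta>, p) \<Rightarrow>
     (case delta A q of
        (QTest f, resp) \<Rightarrow> resp (f (u ! nat p))
      | (QEq i j, resp) \<Rightarrow> resp (\<eta> ! i = \<eta> ! j)))"

lemma step_agree:
  assumes wf: "wf_sutwa A" and ag: "regs_agree (nregs A) \<pi> \<sigma> X \<eta>1 \<eta>2"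
    and untested: "tested_regs (fst (delta A q)) \<inter> X = {}"
  shows "results_agree (nregs A) \<pi> (X - stored_regs (snd (transition A u (q, \<sigma>, p))))
           (step A u (q, \<sigma>, p)) (step A u (q, \<eta>1, p)) (step A u (q, \<eta>2, p))"
proof -
  obtain qu resp where d: "delta A q = (qu, resp)" by fastforce
  show ?thesis
  proof (cases qu)
    case (QTest f)
    obtain q' a where r: "resp (f (u ! nat p)) = (q', a)" by fastforce
    show ?thesis
      using do_action_agree[OF ag wf_sutwa_stored_regs[OF wf d r]] d r QTest
      by (simp add: step_def transition_def)
  next
    case (QEq i j)
    have ij: "i < nregs A" "j < nregs A"
      using wf_sutwa_QEq[OF wf] d QEq by auto
    have "i \<notin> X" "j \<notin> X"
      using untested d QEq by (auto simp: tested_regs_def)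
    then have same: "\<eta>1 ! i = \<sigma> ! i" "\<eta>2 ! i = \<sigma> ! i" "\<eta>1 ! j = \<sigma> ! j" "\<eta>2 ! j = \<sigma> ! j"
      using ag ij by (auto simp: regs_agree_def)
    have unchanged: "X - {i, j} = X"
      using \<open>i \<notin> X\<close> \<open>j \<notin> X\<close> by auto
    obtain q' a where r: "resp (\<sigma> ! i = \<sigma> ! j) = (q', a)" by fastforce
    show ?thesis
    proof (cases "\<sigma> ! i = None \<or> \<sigma> ! j = None")
      case True
      then show ?thesis
        using d QEq same by (auto simp: step_def results_agree_def)
    next
      case False
      then have "step A u (q, \<eta>, p) = do_action u q' a (\<eta>[i := None, j := None]) p"
        if "\<eta> ! i = \<sigma> ! i" "\<eta> ! j = \<sigma> ! j" for \<eta>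
        using False d QEq r that by (auto simp: step_def)
      moreover have "transition A u (q, \<sigma>, p) = (q', a)"
        using d QEq r by (simp add: transition_def)
      ultimately show ?thesis
        using do_action_agree[OF regs_agree_clear[OF ag ij] wf_sutwa_stored_regs[OF wf d r], of u q' p]
          same unchanged by simp
    qed
  qed
qed

type_synonym 'q abstract_config = "'q config \<times> nat set"

definition branch_step :: "'q sutwa \<Rightarrow> letter list \<Rightarrow> 'q abstract_config \<Rightarrow> bool \<Rightarrow> 'q stepres \<times> nat set"
  where "branch_step A u t b = (case t of ((q, \<sigma>, p), X) \<Rightarrow>
    (case delta A q of
       (QEq i j, resp) \<Rightarrow>
         (case resp b of (q', a) \<Rightarrow> (do_action u q' a (\<sigma>[i := None, j := None]) p, X - {i, j} - stored_regs a))
     | (QTest f, resp) \<Rightarrow> (Halt False, X)))" \<comment> \<open>junk: only used at equality tests\<close>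

lemma step_agree_branch:
  assumes wf: "wf_sutwa A" and ag: "regs_agree (nregs A) \<pi> \<sigma> X \<eta>1 \<eta>2"
    and perm: "\<eta>1 = regs_perm \<pi> \<eta>2" and "inj \<pi>"
    and d: "delta A q = (QEq i j, resp)" and defined: "\<eta>2 ! i \<noteq> None" "\<eta>2 ! j \<noteq> None"
  defines "b \<equiv> \<eta>2 ! i = \<eta>2 ! j"
  shows "results_agree (nregs A) \<pi> (snd (branch_step A u ((q, \<sigma>, p), X) b))
           (fst (branch_step A u ((q, \<sigma>, p), X) b)) (step A u (q, \<eta>1, p)) (step A u (q, \<eta>2, p))"
proof -
  have ij: "i < nregs A" "j < nregs A"
    using wf_sutwa_QEq[OF wf d] by auto
  then have "\<eta>1 ! i = map_option \<pi> (\<eta>2 ! i)" "\<eta>1 ! j = map_option \<pi> (\<eta>2 ! j)"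
    using perm ag by (auto simp: regs_perm_def regs_agree_def)
  moreover have "map_option \<pi> x = map_option \<pi> y \<longleftrightarrow> x = y" for x y
    using \<open>inj \<pi>\<close> by (simp add: option.inj_map inj_eq)
  ultimately have "\<eta>1 ! i = \<eta>1 ! j \<longleftrightarrow> b" "\<eta>1 ! i \<noteq> None" "\<eta>1 ! j \<noteq> None"
    using defined by (auto simp: b_def)
  moreover obtain q' a where r: "resp b = (q', a)" by fastforce
  ultimately have "step A u (q, \<eta>1, p) = do_action u q' a (\<eta>1[i := None, j := None]) p"
    and "step A u (q, \<eta>2, p) = do_action u q' a (\<eta>2[i := None, j := None]) p"
    using d defined by (auto simp: step_def b_def)
  then show ?thesis
    using do_action_agree[OF regs_agree_clear[OF ag ij] wf_sutwa_stored_regs[OF wf d r], of u q' p] d r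
    by (simp add: branch_step_def)
qed

datatype 'q abstract_result = ACont "'q abstract_config" | AHalt bool | AExit | ABranch

definition abstract_step :: "'q sutwa \<Rightarrow> letter list \<Rightarrow> 'q abstract_config \<Rightarrow> 'q abstract_result" where
  "abstract_step A u t = (case t of (c, X) \<Rightarrow>
     if \<not> inside u c then AExit
     else if tested_regs (fst (delta A (fst c))) \<inter> X \<noteq> {} then ABranch
     else case step A u c of
       Halt b \<Rightarrow> AHalt b
     | Cont c' \<Rightarrow> ACont (c', X - stored_regs (snd (transition A u c))))"

definition abstract_reaches :: "'q sutwa \<Rightarrow> letter list \<Rightarrow> 'q abstract_config \<Rightarrow> 'q abstract_config \<Rightarrow> bool" where
  "abstract_reaches A u = (\<lambda>t t'. abstract_step A u t = ACont t')\<^sup>*\<^sup>*"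

lemma abstract_reaches_shrinks:
  assumes "abstract_reaches A u ((q, \<sigma>, p), X) ((q', \<sigma>', p'), X')"
  shows "X' \<subseteq> X \<and> length \<sigma>' = length \<sigma>"
  using assms unfolding abstract_reaches_def
proof (induction "((q', \<sigma>', p'), X')" arbitrary: q' \<sigma>' p' X' rule: rtranclp_induct)
  case (step t)
  then obtain q1 \<sigma>1 p1 X1 where "t = ((q1, \<sigma>1, p1), X1)" by (metis prod.collapse)
  with step show ?case
    by (auto simp: abstract_step_def split: if_splits stepres.splits dest!: step_length)
qed simp

lemma abstract_step_ABranch:
  assumes "abstract_step A u ((q, \<sigma>, p), X) = ABranch"
  obtains i j resp where "delta A q = (QEq i j, resp)" and "i \<in> X \<or> j \<in> X"
proof -
  obtain qu resp where "delta A q = (qu, resp)" by fastforce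
  with assms that show thesis
    by (cases qu) (auto simp: abstract_step_def tested_regs_def split: if_splits stepres.splits)
qed

lemma branch_step_shrinks:
  assumes "abstract_step A u ((q, \<sigma>, p), X) = ABranch"
    and "branch_step A u ((q, \<sigma>, p), X) b = (Cont (q', \<sigma>', p'), X')"
  shows "X' \<subset> X \<and> length \<sigma>' = length \<sigma>"
proof -
  obtain i j resp where d: "delta A q = (QEq i j, resp)" and "i \<in> X \<or> j \<in> X"
    using assms(1) by (rule abstract_step_ABranch)
  with assms(2) show ?thesis
    by (auto simp: branch_step_def split: prod.splits dest!: do_action_length)
qed

definition run_supported :: "'q sutwa \<Rightarrow> letter list \<Rightarrow> 'q abstract_config \<Rightarrow> atom list \<Rightarrow> bool" where
  "run_supported A u t S \<longleftrightarrow> (case t of ((q, \<sigma>, p), X) \<Rightarrow>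
     \<forall>\<pi> \<eta>1 \<eta>2. bij \<pi> \<longrightarrow> (\<forall>a\<in>set S. \<pi> a = a) \<longrightarrow> regs_agree (nregs A) \<pi> \<sigma> X \<eta>1 \<eta>2 \<longrightarrow>
       run_outcome A u (q, \<eta>1, p) = outcome_perm \<pi> (run_outcome A u (q, \<eta>2, p)))"

lemma run_supported_mono: "run_supported A u t S \<Longrightarrow> set S \<subseteq> set S' \<Longrightarrow> run_supported A u t S'"
  unfolding run_supported_def by (auto split: prod.splits)

lemma abstract_step_agree:
  assumes wf: "wf_sutwa A" and ag: "regs_agree (nregs A) \<pi> \<sigma> X \<eta>1 \<eta>2"
    and ins: "inside u (q, \<sigma>, p)" and untested: "tested_regs (fst (delta A q)) \<inter> X = {}"
  shows "(\<exists>b. step A u (q, \<eta>1, p) = Halt b \<and> step A u (q, \<eta>2, p) = Halt b) \<or>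
    (\<exists>q' \<sigma>' p' X' \<eta>1' \<eta>2'. abstract_step A u ((q, \<sigma>, p), X) = ACont ((q', \<sigma>', p'), X') \<and>
       step A u (q, \<eta>1, p) = Cont (q', \<eta>1', p') \<and> step A u (q, \<eta>2, p) = Cont (q', \<eta>2', p') \<and>
       regs_agree (nregs A) \<pi> \<sigma>' X' \<eta>1' \<eta>2')"
proof (cases "step A u (q, \<sigma>, p)")
  case (Cont c')
  then obtain q' \<sigma>' p' where "step A u (q, \<sigma>, p) = Cont (q', \<sigma>', p')"
    by (metis prod.collapse)
  then show ?thesis
    using step_agree[OF wf ag untested, of u p] ins untested
    by (auto simp: results_agree_def abstract_step_def)
qed (use step_agree[OF wf ag untested, of u p] in \<open>simp add: results_agree_def\<close>)

lemma run_outcome_branch: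
  assumes wf: "wf_sutwa A" and ag: "regs_agree (nregs A) \<pi> \<sigma> X \<eta>1 \<eta>2"
    and perm: "\<eta>1 = regs_perm \<pi> \<eta>2" and "bij \<pi>" and fixed: "\<forall>a\<in>set S. \<pi> a = a"
    and ins: "inside u (q, \<sigma>, p)" and branch: "abstract_step A u ((q, \<sigma>, p), X) = ABranch"
    and answers: "\<And>b c X'. branch_step A u ((q, \<sigma>, p), X) b = (Cont c, X') \<Longrightarrow> run_supported A u (c, X') S"
  shows "(\<exists>b. step A u (q, \<eta>1, p) = Halt b \<and> step A u (q, \<eta>2, p) = Halt b) \<or>
    run_outcome A u (q, \<eta>1, p) = outcome_perm \<pi> (run_outcome A u (q, \<eta>2, p))"
proof -
  obtain i j resp where d: "delta A q = (QEq i j, resp)"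
    using branch by (rule abstract_step_ABranch)
  have "i < nregs A" "j < nregs A"
    using wf_sutwa_QEq[OF wf d] by auto
  then have "\<eta>1 ! i = map_option \<pi> (\<eta>2 ! i)" "\<eta>1 ! j = map_option \<pi> (\<eta>2 ! j)"
    using perm ag by (auto simp: regs_perm_def regs_agree_def)
  show ?thesis
  proof (cases "\<eta>2 ! i = None \<or> \<eta>2 ! j = None")
    case True
    then show ?thesis
      using d \<open>\<eta>1 ! i = _\<close> \<open>\<eta>1 ! j = _\<close> by (auto simp: step_def)
  next
    case False
    define b where "b = (\<eta>2 ! i = \<eta>2 ! j)"
    obtain r X' where ans: "branch_step A u ((q, \<sigma>, p), X) b = (r, X')" by fastforce
    have results: "results_agree (nregs A) \<pi> X' r (step A u (q, \<eta>1, p)) (step A u (q, \<eta>2, p))"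
      using step_agree_branch[OF wf ag perm bij_is_inj[OF \<open>bij \<pi>\<close>] d, of u p] False ans
      by (simp add: b_def)
    show ?thesis
    proof (cases r)
      case (Cont c')
      obtain q' \<sigma>' p' where "c' = (q', \<sigma>', p')" by (metis prod.collapse)
      with results Cont obtain \<eta>1' \<eta>2' where
        steps: "step A u (q, \<eta>1, p) = Cont (q', \<eta>1', p')" "step A u (q, \<eta>2, p) = Cont (q', \<eta>2', p')"
        and "regs_agree (nregs A) \<pi> \<sigma>' X' \<eta>1' \<eta>2'"
        unfolding results_agree_def by auto
      moreover have "run_supported A u ((q', \<sigma>', p'), X') S"
        using answers ans Cont \<open>c' = _\<close> by simp
      ultimately have "run_outcome A u (q', \<eta>1', p') = outcome_perm \<pi> (run_outcome A u (q', \<eta>2', p'))"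
        using \<open>bij \<pi>\<close> fixed unfolding run_supported_def by simp
      then show ?thesis
        using steps ins by (simp add: run_outcome_Cont inside_def)
    qed (use results in \<open>simp add: results_agree_def\<close>)
  qed
qed

definition abstractly_related ::
    "'q sutwa \<Rightarrow> letter list \<Rightarrow> 'q abstract_config \<Rightarrow> (atom \<Rightarrow> atom) \<Rightarrow> 'q config \<Rightarrow> 'q config \<Rightarrow> bool" where
  "abstractly_related A u t0 \<pi> c1 c2 \<longleftrightarrow> (\<exists>q \<sigma> p X \<eta>1 \<eta>2. abstract_reaches A u t0 ((q, \<sigma>, p), X) \<and>
     c1 = (q, \<eta>1, p) \<and> c2 = (q, \<eta>2, p) \<and> regs_agree (nregs A) \<pi> \<sigma> X \<eta>1 \<eta>2)"

definition stuck_supported :: "'q sutwa \<Rightarrow> letter list \<Rightarrow> 'q abstract_config \<Rightarrow> atom list \<Rightarrow> bool" where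
  "stuck_supported A u t0 S \<longleftrightarrow> (\<forall>q \<sigma> p X. abstract_reaches A u t0 ((q, \<sigma>, p), X) \<longrightarrow>
     (\<forall>t. abstract_step A u ((q, \<sigma>, p), X) \<noteq> ACont t) \<longrightarrow>
     (\<forall>a. Some a \<in> set \<sigma> \<longrightarrow> a \<in> set S) \<and>
     (abstract_step A u ((q, \<sigma>, p), X) = ABranch \<longrightarrow>
        (\<forall>b c X'. branch_step A u ((q, \<sigma>, p), X) b = (Cont c, X') \<longrightarrow> run_supported A u (c, X') S)))"

context
  fixes A :: "'q::finite sutwa" and u t0 S and \<pi> :: "atom \<Rightarrow> atom"
  assumes wf: "wf_sutwa A" and bij: "bij \<pi>" and fixed: "\<forall>a\<in>set S. \<pi> a = a"
    and stuck: "stuck_supported A u t0 S"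
begin

lemma regs_perm_if_stuck:
  assumes "abstract_reaches A u t0 ((q, \<sigma>, p), X)" and "\<forall>t. abstract_step A u ((q, \<sigma>, p), X) \<noteq> ACont t"
    and "regs_agree (nregs A) \<pi> \<sigma> X \<eta>1 \<eta>2"
  shows "\<eta>1 = regs_perm \<pi> \<eta>2"
  using regs_agree_imp_regs_perm[OF assms(3)] stuck assms(1,2) fixed unfolding stuck_supported_def by blast

lemma abstractly_related_exit:
  assumes "abstractly_related A u t0 \<pi> c1 c2" and "\<not> inside u c1"
  shows "exit_outcome u c1 = outcome_perm \<pi> (exit_outcome u c2)"
proof -
  obtain q \<sigma> p X \<eta>1 \<eta>2 where reach: "abstract_reaches A u t0 ((q, \<sigma>, p), X)"
    and c: "c1 = (q, \<eta>1, p)" "c2 = (q, \<eta>2, p)" and ag: "regs_agree (nregs A) \<pi> \<sigma> X \<eta>1 \<eta>2"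
    using assms(1) unfolding abstractly_related_def by blast
  have "abstract_step A u ((q, \<sigma>, p), X) = AExit"
    using assms(2) c by (simp add: abstract_step_def inside_def)
  then have "\<eta>1 = regs_perm \<pi> \<eta>2"
    using regs_perm_if_stuck[OF reach _ ag] by simp
  then show ?thesis
    using c by (simp add: exit_outcome_def)
qed

lemma abstractly_related_step:
  assumes "abstractly_related A u t0 \<pi> c1 c2" and "inside u c1"
  shows "(\<exists>b. step A u c1 = Halt b \<and> step A u c2 = Halt b) \<or>
    (\<exists>c1' c2'. step A u c1 = Cont c1' \<and> step A u c2 = Cont c2' \<and> abstractly_related A u t0 \<pi> c1' c2') \<or>
    run_outcome A u c1 = outcome_perm \<pi> (run_outcome A u c2)"
proof -
  obtain q \<sigma> p X \<eta>1 \<eta>2 where reach: "abstract_reaches A u t0 ((q, \<sigma>, p), X)"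
    and c: "c1 = (q, \<eta>1, p)" "c2 = (q, \<eta>2, p)" and ag: "regs_agree (nregs A) \<pi> \<sigma> X \<eta>1 \<eta>2"
    using assms(1) unfolding abstractly_related_def by blast
  have ins: "inside u (q, \<sigma>, p)"
    using assms(2) c by (simp add: inside_def)
  show ?thesis
  proof (cases "tested_regs (fst (delta A q)) \<inter> X = {}")
    case True
    from abstract_step_agree[OF wf ag ins True] show ?thesis
    proof (elim disjE exE conjE)
      fix q' \<sigma>' p' X' \<eta>1' \<eta>2'
      assume "abstract_step A u ((q, \<sigma>, p), X) = ACont ((q', \<sigma>', p'), X')"
        and "step A u (q, \<eta>1, p) = Cont (q', \<eta>1', p')" "step A u (q, \<eta>2, p) = Cont (q', \<eta>2', p')"
        and "regs_agree (nregs A) \<pi> \<sigma>' X' \<eta>1' \<eta>2'"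
      moreover from this(1) have "abstract_reaches A u t0 ((q', \<sigma>', p'), X')"
        using reach unfolding abstract_reaches_def by (simp add: rtranclp.rtrancl_into_rtrancl)
      ultimately show ?thesis
        unfolding c abstractly_related_def by blast
    qed (simp add: c)
  next
    case False
    with ins have "abstract_step A u ((q, \<sigma>, p), X) = ABranch"
      by (simp add: abstract_step_def)
    with run_outcome_branch[OF wf ag regs_perm_if_stuck[OF reach _ ag] bij fixed ins]
      stuck reach
    have "(\<exists>b. step A u c1 = Halt b \<and> step A u c2 = Halt b) \<or>
        run_outcome A u c1 = outcome_perm \<pi> (run_outcome A u c2)"
      unfolding c stuck_supported_def by simp
    then show ?thesis by blast
  qed
qed

lemma run_outcome_if_stuck_supported:
  assumes "abstract_reaches A u t0 ((q, \<sigma>, p), X)" and "regs_agree (nregs A) \<pi> \<sigma> X \<eta>1 \<eta>2"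
  shows "run_outcome A u (q, \<eta>1, p) = outcome_perm \<pi> (run_outcome A u (q, \<eta>2, p))"
proof (rule run_outcome_simulation[where R = "abstractly_related A u t0 \<pi>"])
  show "abstractly_related A u t0 \<pi> (q, \<eta>1, p) (q, \<eta>2, p)"
    using assms unfolding abstractly_related_def by blast
next
  fix c1 c2 assume "abstractly_related A u t0 \<pi> c1 c2"
  then show "inside u c1 = inside u c2"
    unfolding abstractly_related_def inside_def by auto
qed (fact abstractly_related_exit abstractly_related_step)+

end

lemma run_supported_if_stuck_supported:
  assumes wf: "wf_sutwa A" and stuck: "stuck_supported A u t0 S"
  shows "run_supported A u t0 S"
proof -
  obtain q0 \<sigma>0 p0 X0 where t0: "t0 = ((q0, \<sigma>0, p0), X0)"
    by (metis prod.collapse)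
  have "abstract_reaches A u t0 t0"
    by (simp add: abstract_reaches_def)
  then have "run_outcome A u (q0, \<eta>1, p0) = outcome_perm \<pi> (run_outcome A u (q0, \<eta>2, p0))"
    if "bij \<pi>" "\<forall>a\<in>set S. \<pi> a = a" "regs_agree (nregs A) \<pi> \<sigma>0 X0 \<eta>1 \<eta>2" for \<pi> \<eta>1 \<eta>2
    using run_outcome_if_stuck_supported[OF wf that(1,2) stuck] that(3) unfolding t0 by blast
  then show ?thesis
    unfolding run_supported_def t0 by blast
qed

lemma abstract_reaches_stuck_unique:
  assumes "abstract_reaches A u t t1" "abstract_reaches A u t t2"
    and "\<forall>t'. abstract_step A u t1 \<noteq> ACont t'" "\<forall>t'. abstract_step A u t2 \<noteq> ACont t'"
  shows "t1 = t2"
  by (rule rtranclp_functional_stuck_eq[OF _ assms(1,2)[unfolded abstract_reaches_def]])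
    (use assms(3,4) in simp_all)

lemma branch_supported:
  assumes smaller: "\<And>q' \<sigma>' p' X'. X' \<subset> X \<Longrightarrow> length \<sigma>' = nregs A \<Longrightarrow>
      \<exists>S. length S \<le> M \<and> run_supported A u ((q', \<sigma>', p'), X') S"
    and "X1 \<subseteq> X" and "length \<sigma>1 = nregs A"
  shows "\<exists>S. length S \<le> M \<and> (abstract_step A u ((q1, \<sigma>1, p1), X1) = ABranch \<longrightarrow>
    (\<forall>c X'. branch_step A u ((q1, \<sigma>1, p1), X1) b = (Cont c, X') \<longrightarrow> run_supported A u (c, X') S))"
proof (cases "\<exists>q' \<sigma>' p' X'. abstract_step A u ((q1, \<sigma>1, p1), X1) = ABranch \<and>
    branch_step A u ((q1, \<sigma>1, p1), X1) b = (Cont (q', \<sigma>', p'), X')")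
  case True
  then obtain q' \<sigma>' p' X' where branch: "abstract_step A u ((q1, \<sigma>1, p1), X1) = ABranch"
    and ans: "branch_step A u ((q1, \<sigma>1, p1), X1) b = (Cont (q', \<sigma>', p'), X')"
    by blast
  have "X' \<subset> X1" "length \<sigma>' = length \<sigma>1"
    using branch_step_shrinks[OF branch ans] by auto
  then obtain S where "length S \<le> M" "run_supported A u ((q', \<sigma>', p'), X') S"
    using smaller[of X' \<sigma>' q' p'] assms(2,3) by auto
  with ans show ?thesis
    by auto
next
  case False
  then show ?thesis
    by (intro exI[of _ "[]"]) (auto simp: prod_eq_iff)
qed

lemma run_supported_step:
  assumes wf: "wf_sutwa A" and len: "length \<sigma> = nregs A"
    and smaller: "\<And>q' \<sigma>' p' X'. X' \<subset> X \<Longrightarrow> length \<sigma>' = nregs A \<Longrightarrow>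
      \<exists>S. length S \<le> M \<and> run_supported A u ((q', \<sigma>', p'), X') S"
  shows "\<exists>S. length S \<le> nregs A + 2 * M \<and> run_supported A u ((q, \<sigma>, p), X) S"
proof (cases "\<exists>t. abstract_reaches A u ((q, \<sigma>, p), X) t \<and> (\<forall>t'. abstract_step A u t \<noteq> ACont t')")
  case False
  then have "stuck_supported A u ((q, \<sigma>, p), X) []"
    unfolding stuck_supported_def by blast
  then have "run_supported A u ((q, \<sigma>, p), X) []"
    by (rule run_supported_if_stuck_supported[OF wf])
  then show ?thesis
    by (intro exI[of _ "[]"]) simp
next
  case True
  then obtain q1 \<sigma>1 p1 X1 where reach: "abstract_reaches A u ((q, \<sigma>, p), X) ((q1, \<sigma>1, p1), X1)"
    and stuck: "\<forall>t'. abstract_step A u ((q1, \<sigma>1, p1), X1) \<noteq> ACont t'"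
    by (metis prod.collapse)
  then have "X1 \<subseteq> X" "length \<sigma>1 = nregs A"
    using abstract_reaches_shrinks[OF reach] len by auto
  then obtain Sb where Sb: "\<And>b. length (Sb b) \<le> M \<and> (abstract_step A u ((q1, \<sigma>1, p1), X1) = ABranch \<longrightarrow>
      (\<forall>c X'. branch_step A u ((q1, \<sigma>1, p1), X1) b = (Cont c, X') \<longrightarrow> run_supported A u (c, X') (Sb b)))"
    using branch_supported[OF smaller] by metis
  \<comment> \<open>the atoms known where the abstract run stops, and supports for both answers of its test\<close>
  define S where "S = List.map_filter id \<sigma>1 @ Sb True @ Sb False"
  have "length (List.map_filter id \<sigma>1) \<le> nregs A"
    using \<open>length \<sigma>1 = nregs A\<close> by (metis length_filter_le length_map map_filter_def)
  then have "length S \<le> nregs A + 2 * M"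
    using Sb[of True] Sb[of False] by (simp add: S_def)
  moreover have "run_supported A u ((q, \<sigma>, p), X) S"
  proof (rule run_supported_if_stuck_supported[OF wf], unfold stuck_supported_def, intro allI impI)
    fix q' \<sigma>' p' X'
    assume "abstract_reaches A u ((q, \<sigma>, p), X) ((q', \<sigma>', p'), X')"
      and "\<forall>t. abstract_step A u ((q', \<sigma>', p'), X') \<noteq> ACont t"
    then have "((q', \<sigma>', p'), X') = ((q1, \<sigma>1, p1), X1)"
      using abstract_reaches_stuck_unique reach stuck by blast
    moreover have "Some a \<in> set \<sigma>1 \<Longrightarrow> a \<in> set S" for a
      by (force simp: S_def map_filter_def)
    moreover have "run_supported A u (c, X'') S"
      if "abstract_step A u ((q1, \<sigma>1, p1), X1) = ABranch"
        and "branch_step A u ((q1, \<sigma>1, p1), X1) b = (Cont c, X'')" for b c X''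
    proof (rule run_supported_mono)
      show "run_supported A u (c, X'') (Sb b)"
        using Sb[of b] that by blast
      show "set (Sb b) \<subseteq> set S"
        by (cases b) (auto simp: S_def)
    qed
    ultimately show "(\<forall>a. Some a \<in> set \<sigma>' \<longrightarrow> a \<in> set S) \<and>
        (abstract_step A u ((q', \<sigma>', p'), X') = ABranch \<longrightarrow>
           (\<forall>b c X''. branch_step A u ((q', \<sigma>', p'), X') b = (Cont c, X'') \<longrightarrow> run_supported A u (c, X'') S))"
      by simp
  qed
  ultimately show ?thesis by blast
qed

fun support_bound :: "nat \<Rightarrow> nat \<Rightarrow> nat" where
  "support_bound k 0 = k"
| "support_bound k (Suc n) = k + 2 * support_bound k n"

lemma run_supported_bounded:
  assumes wf: "wf_sutwa A" and "finite X" "card X \<le> n" "length \<sigma> = nregs A"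
  shows "\<exists>S. length S \<le> support_bound (nregs A) n \<and> run_supported A u ((q, \<sigma>, p), X) S"
  using assms(2-4)
proof (induction n arbitrary: q \<sigma> p X)
  case 0
  then have "X = {}" by simp
  with run_supported_step[OF wf \<open>length \<sigma> = nregs A\<close>, of X 0 u q p] show ?case
    by simp
next
  case (Suc n)
  have "\<exists>S. length S \<le> support_bound (nregs A) n \<and> run_supported A u ((q', \<sigma>', p'), X') S"
    if "X' \<subset> X" "length \<sigma>' = nregs A" for q' \<sigma>' p' X'
  proof (rule Suc.IH)
    show "finite X'" using that(1) \<open>finite X\<close> finite_subset by blast
    show "card X' \<le> n" using psubset_card_mono[OF \<open>finite X\<close> that(1)] \<open>card X \<le> Suc n\<close> by simp
  qed (fact that(2))
  with run_supported_step[OF wf \<open>length \<sigma> = nregs A\<close>] show ?case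
    by simp
qed

lemma supports_profile_if_run_supported:
  assumes supported: "\<And>q d. run_supported A u (start_config u q (replicate (nregs A) None) d, {..<nregs A}) S"
  shows "supports_profile S (shepherdson_profile A u)"
  unfolding supports_profile_def
proof (intro allI impI ext)
  fix \<pi> and x :: "'a \<times> regs \<times> side"
  assume "atom_aut \<pi>" and fixed: "\<forall>a\<in>set S. \<pi> a = a"
  then have "bij \<pi>" by (simp add: atom_aut_def)
  obtain q \<eta> d where x: "x = (q, \<eta>, d)" by (metis prod.collapse)
  obtain p where start: "\<And>\<eta>'. start_config u q \<eta>' d = (q, \<eta>', p)"
    by (simp add: start_config_def)
  show "profile_perm \<pi> (shepherdson_profile A u) x = shepherdson_profile A u x"
  proof (cases "length \<eta> = nregs A")
    case True
    have "regs_agree (nregs A) \<pi> (replicate (nregs A) None) {..<nregs A} \<eta> (regs_perm (inv \<pi>) \<eta>)"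
      using True \<open>bij \<pi>\<close> by (auto simp: regs_agree_def regs_perm_def option.map_comp bij_is_surj surj_f_inv_f o_def option.map_ident)
    then have "run_outcome A u (q, \<eta>, p) = outcome_perm \<pi> (run_outcome A u (q, regs_perm (inv \<pi>) \<eta>, p))"
      using supported[of q d] \<open>bij \<pi>\<close> fixed by (simp add: start run_supported_def)
    then show ?thesis
      using True by (simp add: x profile_perm_def shepherdson_profile_def start regs_perm_def)
  qed (simp add: x profile_perm_def shepherdson_profile_def regs_perm_def)
qed

lemma shepherdson_profile_supported:
  fixes A :: "('q::finite) sutwa"
  assumes "wf_sutwa A"
  shows "\<exists>as. length as \<le> card (UNIV :: 'q set) * 2 * support_bound (nregs A) (nregs A) \<and>
    supports_profile as (shepherdson_profile A u)"
proof -
  define I where "I = (UNIV :: 'q set) \<times> {LeftSide, RightSide}"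
  define P where "P i S \<longleftrightarrow>
    run_supported A u (start_config u (fst i) (replicate (nregs A) None) (snd i), {..<nregs A}) S" for i S
  have "\<exists>S. length S \<le> support_bound (nregs A) (nregs A) \<and> P i S" for i
    using run_supported_bounded[OF assms, of "{..<nregs A}" "nregs A" "replicate (nregs A) None" u]
    by (simp add: P_def start_config_def)
  moreover have "P i S'" if "P i S" "set S \<subseteq> set S'" for i S S'
    using that run_supported_mono unfolding P_def by blast
  moreover have "finite I"
    by (simp add: I_def)
  ultimately obtain S where "length S \<le> card I * support_bound (nregs A) (nregs A)"
    and "\<forall>i\<in>I. P i S"
    using finite_family_common_list[of I "support_bound (nregs A) (nregs A)" P] by blast
  moreover have "card I = card (UNIV :: 'q set) * 2"
    by (simp add: I_def card_cartesian_product)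
  moreover have "(q, d) \<in> I" for q d
    by (cases d) (simp_all add: I_def)
  ultimately show ?thesis
    using supports_profile_if_run_supported unfolding P_def by fastforce
qed

theorem mainTheorem2:
  fixes A :: "('q::finite) sutwa"
  assumes "wf_sutwa A"
  shows "\<exists>N::nat. \<forall>u \<in> lists (letters (alph A)).
           \<exists>as::atom list. length as \<le> N \<and> supports_profile as (shepherdson_profile A u)"
  using shepherdson_profile_supported[OF assms] by blast

end
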